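(* Every path-connected almost totally disconnected compact space is a Corson compact, i.e. is homeomorphic to a subspace of $\Sigma[0,1]^\Gamma$ for some set $\Gamma$.
   Context: For a set $\Gamma$, $\Sigma[0,1]^\Gamma$ is the subspace of $[0,1]^\Gamma$ (product topology) of points with countable support (i.e. $x_\gamma\neq0$ for only countably many $\gamma$), and $\Sigma_0^1[0,1]^\Gamma$ is the subspace of $[0,1]^\Gamma$ consisting of those $x$ with $x_\gamma\in\{0,1\}$ for all but countably many $\gamma$. A compact space is almost totally disconnected if it is homeomorphic to a subspace of $\Sigma_0^1[0,1]^\Gamma$ for some set $\Gamma$. *)

theory Defs
  imports "HOL-Analysis.Analysis"
begin

text \<open>The cube [0,1]^Gamma with the product topology (points are extensional
  functions on Gamma, as in the library's product_topology).\<close>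
definition cube_top :: "'i set \<Rightarrow> ('i \<Rightarrow> real) topology" where
  "cube_top \<Gamma> = product_topology (\<lambda>_. top_of_set {0..1::real}) \<Gamma>"

definition Sigma_cube :: "'i set \<Rightarrow> ('i \<Rightarrow> real) set" where
  "Sigma_cube \<Gamma> = {x \<in> topspace (cube_top \<Gamma>). countable {\<gamma>\<in>\<Gamma>. x \<gamma> \<noteq> 0}}"

definition Sigma01_cube :: "'i set \<Rightarrow> ('i \<Rightarrow> real) set" where
  "Sigma01_cube \<Gamma> = {x \<in> topspace (cube_top \<Gamma>). countable {\<gamma>\<in>\<Gamma>. x \<gamma> \<notin> {0,1}}}"

text \<open>The index set Gamma is taken in the type 'a set (subsets of points of X), which is
  large enough to index a base of X, so no generality is lost.\<close>
definition corson_compact :: "'a topology \<Rightarrow> bool" where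
  "corson_compact X \<longleftrightarrow> compact_space X \<and>
     (\<exists>(\<Gamma>::'a set set) A. A \<subseteq> Sigma_cube \<Gamma> \<and>
        X homeomorphic_space subtopology (cube_top \<Gamma>) A)"

end

theory Submission imports Defs begin

(* Let h embed the compact path-connected space X into Sigma_0^1[0,1]^Gamma and write
   c_g = h(-)_g for its coordinates.  Fix a base point a.  If c_g(x) <> c_g(a), then along
   a path from a to x the coordinate c_g crosses the open interval ]0,1[ at some rational
   time, unless c_g(x) or c_g(a) already lies outside {0,1}.  Since each of the countably
   many points of the path at rational times has only countably many coordinates outside
   {0,1}, the deviations c_g - c_g(a) have countable support.  Their positive and negative
   parts form a point-separating family of continuous maps X -> [0,1] with countable
   support at each point.
   The remaining step is general: such a family yields an embedding into Sigma[0,1]^G for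
   an index set G of subsets of X (as the definition of Corson compactness demands),
   namely the rational superlevel sets {f_k > q}, each carrying the coordinate
   max 0 (f_k - q). *)

lemma rational_crossing:
  fixes f :: "real \<Rightarrow> real"
  assumes cont: "continuous_on {0..1} f" and ends: "f 0 \<in> {0,1}" "f 1 \<in> {0,1}" "f 0 \<noteq> f 1"
  shows "\<exists>r\<in>\<rat>. r \<in> {0..1} \<and> 0 < f r \<and> f r < 1"
proof -
  have "\<exists>t\<in>{0..1}. f t = 1/2"
  proof (cases "f 0 = 0")
    case True
    then have "f 1 = 1" using ends by auto
    then show ?thesis using IVT'[of f 0 "1/2" 1] cont True by auto
  next
    case False
    then have "f 0 = 1" "f 1 = 0" using ends by auto
    then show ?thesis using IVT2'[of f 1 "1/2" 0] cont by auto
  qed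
  then obtain t where t: "t \<in> {0..1}" "f t = 1/2" by blast
  from cont t(1) obtain d where d: "d > 0" "\<forall>s\<in>{0..1}. dist s t < d \<longrightarrow> dist (f s) (f t) < 1/2"
    unfolding continuous_on_iff by (meson half_gt_zero_iff zero_less_one)
  have "max 0 (t - d) < min 1 (t + d)" using t d by auto
  then obtain r where r: "r \<in> \<rat>" "max 0 (t - d) < r" "r < min 1 (t + d)"
    using Rats_dense_in_real by blast
  then have "r \<in> {0..1}" "dist r t < d" by (auto simp: dist_real_def)
  with d t have "dist (f r) (1/2) < 1/2" by auto
  then have "0 < f r \<and> f r < 1" unfolding dist_real_def by linarith
  then show ?thesis using r \<open>r \<in> {0..1}\<close> by blast
qed

lemma countable_coordinate_differences:
  fixes X :: "'a topology" and c :: "'b \<Rightarrow> 'a \<Rightarrow> real"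
  assumes pc: "path_connected_space X"
    and cont: "\<And>\<gamma>. \<gamma> \<in> \<Gamma> \<Longrightarrow> continuous_map X euclideanreal (c \<gamma>)"
    and cnt: "\<And>x. x \<in> topspace X \<Longrightarrow> countable {\<gamma>\<in>\<Gamma>. c \<gamma> x \<notin> {0,1}}"
    and x: "x \<in> topspace X" and a: "a \<in> topspace X"
  shows "countable {\<gamma>\<in>\<Gamma>. c \<gamma> x \<noteq> c \<gamma> a}"
proof -
  obtain p where p: "pathin X p" "p 0 = a" "p 1 = x"
    using pc x a unfolding path_connected_space_def by blast
  have p_in: "p r \<in> topspace X" if "r \<in> {0..1}" for r
    using continuous_map_image_subset_topspace[OF p(1)[unfolded pathin_def]] that by auto
  define bad where "bad y = {\<gamma>\<in>\<Gamma>. c \<gamma> y \<notin> {0,1}}" for y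
  have "{\<gamma>\<in>\<Gamma>. c \<gamma> x \<noteq> c \<gamma> a} \<subseteq> bad x \<union> bad a \<union> (\<Union>r\<in>\<rat>\<inter>{0..1}. bad (p r))"
  proof
    fix \<gamma> assume \<gamma>: "\<gamma> \<in> {\<gamma>\<in>\<Gamma>. c \<gamma> x \<noteq> c \<gamma> a}"
    show "\<gamma> \<in> bad x \<union> bad a \<union> (\<Union>r\<in>\<rat>\<inter>{0..1}. bad (p r))"
    proof (cases "c \<gamma> x \<in> {0,1} \<and> c \<gamma> a \<in> {0,1}")
      case True
      have "continuous_map (top_of_set {0..1}) euclideanreal (c \<gamma> \<circ> p)"
        using p(1) cont[of \<gamma>] \<gamma> unfolding pathin_def by (intro continuous_map_compose[of _ X]) auto
      then have "continuous_on {0..1} (c \<gamma> \<circ> p)" by simp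
      moreover have "(c \<gamma> \<circ> p) 0 \<in> {0,1}" "(c \<gamma> \<circ> p) 1 \<in> {0,1}" "(c \<gamma> \<circ> p) 0 \<noteq> (c \<gamma> \<circ> p) 1"
        using True \<gamma> p(2,3) by auto
      ultimately obtain r where r: "r \<in> \<rat> \<inter> {0..1}" "0 < c \<gamma> (p r)" "c \<gamma> (p r) < 1"
        using rational_crossing[of "c \<gamma> \<circ> p"] by auto
      then have "\<gamma> \<in> bad (p r)" using \<gamma> by (auto simp: bad_def)
      then show ?thesis using r(1) by blast
    qed (use \<gamma> in \<open>auto simp: bad_def\<close>)
  qed
  moreover have "countable (bad x \<union> bad a \<union> (\<Union>r\<in>\<rat>\<inter>{0..1}. bad (p r)))"
    unfolding bad_def using cnt x a p_in countable_rat
    by (intro countable_Un countable_UN) (auto intro: countable_Int1)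
  ultimately show ?thesis by (rule countable_subset)
qed

text \<open>Corson compactness from an embedding into Sigma[0,1]^G, where G is a family of
  subsets of the space (compactness turns a continuous injection into an embedding).\<close>
lemma corson_compact_if_injection:
  fixes X :: "'a topology" and G :: "'a set set"
  assumes comp: "compact_space X" and cont: "continuous_map X (cube_top G) e"
    and inj: "inj_on e (topspace X)" and sub: "e ` topspace X \<subseteq> Sigma_cube G"
  shows "corson_compact X"
proof -
  have "Hausdorff_space (cube_top G)"
    unfolding cube_top_def Hausdorff_space_product_topology by (simp add: Hausdorff_space_subtopology)
  then have "embedding_map X (cube_top G) e"
    using continuous_imp_embedding_map[OF cont comp _ inj] by blast
  then show ?thesis
    unfolding corson_compact_def using comp sub embedding_map_imp_homeomorphic_space by blast
qed

text \<open>Each such set U is tagged by one chosen label (k, q) producing it, and carries the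
  coordinate max 0 (f k - q), which is positive exactly on U.\<close>
definition superlevel :: "'a topology \<Rightarrow> ('k \<Rightarrow> 'a \<Rightarrow> real) \<Rightarrow> 'k \<times> real \<Rightarrow> 'a set" where
  "superlevel X f l = {x \<in> topspace X. snd l < f (fst l) x}"

definition superlevel_sets :: "'a topology \<Rightarrow> ('k \<Rightarrow> 'a \<Rightarrow> real) \<Rightarrow> 'k set \<Rightarrow> 'a set set" where
  "superlevel_sets X f K = superlevel X f ` (K \<times> (\<rat> \<inter> {0..}))"

definition superlevel_label :: "'a topology \<Rightarrow> ('k \<Rightarrow> 'a \<Rightarrow> real) \<Rightarrow> 'k set \<Rightarrow> 'a set \<Rightarrow> 'k \<times> real" where
  "superlevel_label X f K U = (SOME l. l \<in> K \<times> (\<rat> \<inter> {0..}) \<and> U = superlevel X f l)"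

definition superlevel_coord :: "'a topology \<Rightarrow> ('k \<Rightarrow> 'a \<Rightarrow> real) \<Rightarrow> 'k set \<Rightarrow> 'a set \<Rightarrow> 'a \<Rightarrow> real" where
  "superlevel_coord X f K U x =
     (let l = superlevel_label X f K U in max 0 (f (fst l) x - snd l))"

definition superlevel_map :: "'a topology \<Rightarrow> ('k \<Rightarrow> 'a \<Rightarrow> real) \<Rightarrow> 'k set \<Rightarrow> 'a \<Rightarrow> 'a set \<Rightarrow> real" where
  "superlevel_map X f K x = restrict (\<lambda>U. superlevel_coord X f K U x) (superlevel_sets X f K)"

lemma superlevel_label:
  assumes "U \<in> superlevel_sets X f K"
  shows "superlevel_label X f K U \<in> K \<times> (\<rat> \<inter> {0..})"
    and "U = superlevel X f (superlevel_label X f K U)"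
proof -
  have "\<exists>l. l \<in> K \<times> (\<rat> \<inter> {0..}) \<and> U = superlevel X f l"
    using assms unfolding superlevel_sets_def by blast
  then have "superlevel_label X f K U \<in> K \<times> (\<rat> \<inter> {0..}) \<and> U = superlevel X f (superlevel_label X f K U)"
    unfolding superlevel_label_def by (rule someI_ex)
  then show "superlevel_label X f K U \<in> K \<times> (\<rat> \<inter> {0..})"
    and "U = superlevel X f (superlevel_label X f K U)" by auto
qed

lemma superlevel_coord_pos_iff:
  assumes "U \<in> superlevel_sets X f K" and "x \<in> topspace X"
  shows "0 < superlevel_coord X f K U x \<longleftrightarrow> x \<in> U"
proof -
  define l where "l = superlevel_label X f K U"
  have "U = superlevel X f l"
    using superlevel_label(2)[OF assms(1)] by (simp add: l_def)
  then have "x \<in> U \<longleftrightarrow> snd l < f (fst l) x"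
    using assms(2) by (simp add: superlevel_def)
  then show ?thesis
    unfolding superlevel_coord_def Let_def l_def[symmetric] by auto
qed

lemma superlevel_coord_range:
  assumes "U \<in> superlevel_sets X f K" and "x \<in> topspace X"
    and rng: "\<And>k x. k \<in> K \<Longrightarrow> x \<in> topspace X \<Longrightarrow> f k x \<in> {0..1}"
  shows "superlevel_coord X f K U x \<in> {0..1}"
  using superlevel_label(1)[OF assms(1)] rng[of "fst (superlevel_label X f K U)" x] assms(2)
  by (auto simp: superlevel_coord_def Let_def)

lemma continuous_superlevel_map:
  assumes cont: "\<And>k. k \<in> K \<Longrightarrow> continuous_map X euclideanreal (f k)"
    and rng: "\<And>k x. k \<in> K \<Longrightarrow> x \<in> topspace X \<Longrightarrow> f k x \<in> {0..1}"
  shows "continuous_map X (cube_top (superlevel_sets X f K)) (superlevel_map X f K)"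
  unfolding cube_top_def continuous_map_componentwise
proof (intro conjI ballI)
  show "superlevel_map X f K ` topspace X \<subseteq> extensional (superlevel_sets X f K)"
    unfolding superlevel_map_def by auto
  fix U assume U: "U \<in> superlevel_sets X f K"
  define l where "l = superlevel_label X f K U"
  have "fst l \<in> K" using superlevel_label(1)[OF U] unfolding l_def by auto
  then have "continuous_map X euclideanreal (\<lambda>x. max 0 (f (fst l) x - snd l))"
    using cont by (intro continuous_map_real_max continuous_map_diff) auto
  moreover have "(\<lambda>x. superlevel_map X f K x U) = (\<lambda>x. max 0 (f (fst l) x - snd l))"
    using U by (simp add: superlevel_map_def superlevel_coord_def l_def fun_eq_iff Let_def)
  ultimately show "continuous_map X (top_of_set {0..1}) (\<lambda>x. superlevel_map X f K x U)"
    using superlevel_coord_range[OF U _ rng] U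
    by (simp add: continuous_map_in_subtopology superlevel_map_def)
qed

text \<open>A rational level between f k x and f k y gives a superlevel set containing
  exactly one of x and y; hence a separating family yields an injective map.\<close>
lemma inj_on_superlevel_map:
  assumes rng: "\<And>k x. k \<in> K \<Longrightarrow> x \<in> topspace X \<Longrightarrow> f k x \<in> {0..1}"
    and sep: "\<And>x y. x \<in> topspace X \<Longrightarrow> y \<in> topspace X \<Longrightarrow> x \<noteq> y \<Longrightarrow> \<exists>k\<in>K. f k x \<noteq> f k y"
  shows "inj_on (superlevel_map X f K) (topspace X)"
proof -
  have distinct: "superlevel_map X f K x \<noteq> superlevel_map X f K y"
    if x: "x \<in> topspace X" and y: "y \<in> topspace X" and k: "k \<in> K" "f k x < f k y" for x y k
  proof -
    obtain q where q: "q \<in> \<rat>" "f k x < q" "q < f k y" using Rats_dense_in_real k(2) by blast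
    have "0 \<le> q" using q rng[OF k(1) x] by auto
    then have U: "superlevel X f (k, q) \<in> superlevel_sets X f K"
      unfolding superlevel_sets_def using k(1) q(1) by auto
    have "y \<in> superlevel X f (k, q)" "x \<notin> superlevel X f (k, q)"
      using q x y by (auto simp: superlevel_def)
    then have "superlevel_coord X f K (superlevel X f (k, q)) x
        \<noteq> superlevel_coord X f K (superlevel X f (k, q)) y"
      using superlevel_coord_pos_iff[OF U x] superlevel_coord_pos_iff[OF U y] by auto
    then show ?thesis using U unfolding superlevel_map_def by (metis restrict_apply')
  qed
  show ?thesis
  proof (rule inj_onI, rule ccontr)
    fix x y assume x: "x \<in> topspace X" and y: "y \<in> topspace X"
      and eq: "superlevel_map X f K x = superlevel_map X f K y" and "x \<noteq> y"
    then obtain k where "k \<in> K" "f k x \<noteq> f k y" using sep by blast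
    then show False using distinct[OF x y] distinct[OF y x] eq by (metis linorder_neqE_linordered_idom)
  qed
qed

text \<open>If f has countable support at x, then x lies in only countably many superlevel sets,
  so its image has countable support.\<close>
lemma superlevel_map_in_Sigma_cube:
  assumes cont: "\<And>k. k \<in> K \<Longrightarrow> continuous_map X euclideanreal (f k)"
    and rng: "\<And>k x. k \<in> K \<Longrightarrow> x \<in> topspace X \<Longrightarrow> f k x \<in> {0..1}"
    and supp: "\<And>x. x \<in> topspace X \<Longrightarrow> countable {k\<in>K. f k x \<noteq> 0}"
    and x: "x \<in> topspace X"
  shows "superlevel_map X f K x \<in> Sigma_cube (superlevel_sets X f K)"
proof -
  let ?G = "superlevel_sets X f K"
  have "{U\<in>?G. superlevel_map X f K x U \<noteq> 0} \<subseteq> superlevel X f ` ({k\<in>K. f k x \<noteq> 0} \<times> (\<rat> \<inter> {0..}))"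
  proof
    fix U assume "U \<in> {U\<in>?G. superlevel_map X f K x U \<noteq> 0}"
    then have U: "U \<in> ?G" and "x \<in> U"
      using superlevel_coord_pos_iff[of U X f K x] superlevel_coord_range[of U X f K x] x rng
      by (auto simp: superlevel_map_def)
    obtain k q where l: "superlevel_label X f K U = (k, q)" by fastforce
    have "k \<in> K" "q \<in> \<rat> \<inter> {0..}" "U = superlevel X f (k, q)"
      using superlevel_label[OF U] l by auto
    moreover have "f k x \<noteq> 0" using \<open>x \<in> U\<close> \<open>U = superlevel X f (k, q)\<close> \<open>q \<in> \<rat> \<inter> {0..}\<close>
      by (auto simp: superlevel_def)
    ultimately show "U \<in> superlevel X f ` ({k\<in>K. f k x \<noteq> 0} \<times> (\<rat> \<inter> {0..}))" by blast
  qed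
  then have "countable {U\<in>?G. superlevel_map X f K x U \<noteq> 0}"
    by (rule countable_subset) (use supp[OF x] countable_rat in \<open>auto intro: countable_SIGMA\<close>)
  moreover have "continuous_map X (cube_top ?G) (superlevel_map X f K)"
    using cont rng by (rule continuous_superlevel_map)
  then have "superlevel_map X f K x \<in> topspace (cube_top ?G)"
    using continuous_map_image_subset_topspace x by blast
  ultimately show ?thesis unfolding Sigma_cube_def by auto
qed

lemma corson_compact_if_separating_family:
  fixes X :: "'a topology" and f :: "'k \<Rightarrow> 'a \<Rightarrow> real"
  assumes comp: "compact_space X"
    and cont: "\<And>k. k \<in> K \<Longrightarrow> continuous_map X euclideanreal (f k)"
    and rng: "\<And>k x. k \<in> K \<Longrightarrow> x \<in> topspace X \<Longrightarrow> f k x \<in> {0..1}"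
    and sep: "\<And>x y. x \<in> topspace X \<Longrightarrow> y \<in> topspace X \<Longrightarrow> x \<noteq> y \<Longrightarrow> \<exists>k\<in>K. f k x \<noteq> f k y"
    and supp: "\<And>x. x \<in> topspace X \<Longrightarrow> countable {k\<in>K. f k x \<noteq> 0}"
  shows "corson_compact X"
proof (rule corson_compact_if_injection[OF comp])
  show "continuous_map X (cube_top (superlevel_sets X f K)) (superlevel_map X f K)"
    using cont rng by (rule continuous_superlevel_map)
  show "inj_on (superlevel_map X f K) (topspace X)"
    using rng sep by (rule inj_on_superlevel_map)
  show "superlevel_map X f K ` topspace X \<subseteq> Sigma_cube (superlevel_sets X f K)"
    using superlevel_map_in_Sigma_cube[of K X f, OF cont rng supp] by blast
qed

definition deviation_part :: "('b \<Rightarrow> 'a \<Rightarrow> real) \<Rightarrow> 'a \<Rightarrow> 'b \<times> bool \<Rightarrow> 'a \<Rightarrow> real" where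
  "deviation_part c a k x =
     (if snd k then max 0 (c (fst k) x - c (fst k) a) else max 0 (c (fst k) a - c (fst k) x))"

lemma continuous_deviation_part:
  assumes "continuous_map X euclideanreal (c (fst k))"
  shows "continuous_map X euclideanreal (deviation_part c a k)"
  using assms unfolding deviation_part_def
  by (cases "snd k") (auto intro!: continuous_map_real_max continuous_map_diff)

lemma deviation_part_range:
  assumes "c (fst k) x \<in> {0..1}" and "c (fst k) a \<in> {0..1}"
  shows "deviation_part c a k x \<in> {0..1}"
  using assms by (auto simp: deviation_part_def)

lemma deviation_part_eq_zero:
  assumes "c (fst k) x = c (fst k) a"
  shows "deviation_part c a k x = 0"
  using assms by (simp add: deviation_part_def)

text \<open>The two parts together recover the deviation, so they separate what c separates.\<close>
lemma deviation_parts_separate: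
  assumes "c g x \<noteq> c g y"
  shows "\<exists>b. deviation_part c a (g, b) x \<noteq> deviation_part c a (g, b) y"
  using assms by (auto simp: deviation_part_def max_def intro: exI[of _ True] exI[of _ False])

lemma corson_compact_if_almost_zero_one_coordinates:
  fixes X :: "'a topology" and c :: "'b \<Rightarrow> 'a \<Rightarrow> real"
  assumes comp: "compact_space X" and pc: "path_connected_space X"
    and cont: "\<And>\<gamma>. \<gamma> \<in> \<Gamma> \<Longrightarrow> continuous_map X euclideanreal (c \<gamma>)"
    and rng: "\<And>\<gamma> x. \<gamma> \<in> \<Gamma> \<Longrightarrow> x \<in> topspace X \<Longrightarrow> c \<gamma> x \<in> {0..1}"
    and cnt: "\<And>x. x \<in> topspace X \<Longrightarrow> countable {\<gamma>\<in>\<Gamma>. c \<gamma> x \<notin> {0,1}}"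
    and sep: "\<And>x y. x \<in> topspace X \<Longrightarrow> y \<in> topspace X \<Longrightarrow> x \<noteq> y \<Longrightarrow> \<exists>\<gamma>\<in>\<Gamma>. c \<gamma> x \<noteq> c \<gamma> y"
  shows "corson_compact X"
proof -
  define a where "a = (SOME a. a \<in> topspace X)"
  have a: "a \<in> topspace X" if "x \<in> topspace X" for x
    using that unfolding a_def by (rule someI)
  have supp: "countable {k \<in> \<Gamma> \<times> UNIV. deviation_part c a k x \<noteq> 0}" if x: "x \<in> topspace X" for x
  proof (rule countable_subset)
    show "{k \<in> \<Gamma> \<times> UNIV. deviation_part c a k x \<noteq> 0} \<subseteq> {\<gamma>\<in>\<Gamma>. c \<gamma> x \<noteq> c \<gamma> a} \<times> UNIV"
    proof
      fix k assume k: "k \<in> {k \<in> \<Gamma> \<times> UNIV. deviation_part c a k x \<noteq> 0}"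
      then have "c (fst k) x \<noteq> c (fst k) a" using deviation_part_eq_zero[of c k x a] by auto
      then show "k \<in> {\<gamma>\<in>\<Gamma>. c \<gamma> x \<noteq> c \<gamma> a} \<times> UNIV" using k by (cases k) auto
    qed
    have "countable {\<gamma>\<in>\<Gamma>. c \<gamma> x \<noteq> c \<gamma> a}"
      using pc cont cnt x a[OF x] by (rule countable_coordinate_differences)
    then show "countable ({\<gamma>\<in>\<Gamma>. c \<gamma> x \<noteq> c \<gamma> a} \<times> (UNIV :: bool set))"
      by (intro countable_SIGMA) auto
  qed
  show ?thesis
  proof (rule corson_compact_if_separating_family[OF comp, where K = "\<Gamma> \<times> UNIV" and f = "deviation_part c a"])
    show "continuous_map X euclideanreal (deviation_part c a k)" if "k \<in> \<Gamma> \<times> UNIV" for k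
      using that by (intro continuous_deviation_part cont) auto
    show "deviation_part c a k x \<in> {0..1}" if k: "k \<in> \<Gamma> \<times> UNIV" and x: "x \<in> topspace X" for k x
    proof (rule deviation_part_range)
      have "fst k \<in> \<Gamma>" using k by auto
      then show "c (fst k) x \<in> {0..1}" and "c (fst k) a \<in> {0..1}"
        using rng x a[OF x] by blast+
    qed
    show "\<exists>k\<in>\<Gamma> \<times> UNIV. deviation_part c a k x \<noteq> deviation_part c a k y"
      if xy: "x \<in> topspace X" "y \<in> topspace X" "x \<noteq> y" for x y
    proof -
      obtain \<gamma> where \<gamma>: "\<gamma> \<in> \<Gamma>" "c \<gamma> x \<noteq> c \<gamma> y" using sep[OF xy] by blast
      obtain b where "deviation_part c a (\<gamma>, b) x \<noteq> deviation_part c a (\<gamma>, b) y"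
        using deviation_parts_separate[of c \<gamma> x y a] \<gamma>(2) by blast
      moreover have "(\<gamma>, b) \<in> \<Gamma> \<times> UNIV" using \<gamma>(1) by simp
      ultimately show ?thesis by blast
    qed
  qed (rule supp)
qed

theorem proposition1:
  fixes X :: "'a topology" and \<Gamma> :: "'b set" and A :: "('b \<Rightarrow> real) set"
  assumes "compact_space X"
    and "path_connected_space X"
    and "A \<subseteq> Sigma01_cube \<Gamma>"
    and "X homeomorphic_space subtopology (cube_top \<Gamma>) A"
  shows "corson_compact X"
proof -
  obtain h where h: "homeomorphic_map X (subtopology (cube_top \<Gamma>) A) h"
    using assms(4) unfolding homeomorphic_space by blast
  then have ch: "continuous_map X (cube_top \<Gamma>) h" and hA: "h \<in> topspace X \<rightarrow> A"
    using homeomorphic_imp_continuous_map[OF h] by (auto simp: continuous_map_in_subtopology)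
  have h_cube: "h x \<in> (\<Pi>\<^sub>E i\<in>\<Gamma>. {0..1})" if "x \<in> topspace X" for x
    using continuous_map_image_subset_topspace[OF ch] that unfolding cube_top_def by auto
  show ?thesis
  proof (rule corson_compact_if_almost_zero_one_coordinates[OF assms(1,2), where c = "\<lambda>\<gamma> x. h x \<gamma>"])
    show "continuous_map X euclideanreal (\<lambda>x. h x \<gamma>)" if "\<gamma> \<in> \<Gamma>" for \<gamma>
      using ch that unfolding cube_top_def continuous_map_componentwise
      by (auto simp: continuous_map_in_subtopology)
    show "countable {\<gamma>\<in>\<Gamma>. h x \<gamma> \<notin> {0,1}}" if "x \<in> topspace X" for x
      using hA assms(3) that unfolding Sigma01_cube_def by auto
    show "h x \<gamma> \<in> {0..1}" if "\<gamma> \<in> \<Gamma>" "x \<in> topspace X" for \<gamma> x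
      using h_cube[OF that(2)] that(1) by blast
    show "\<exists>\<gamma>\<in>\<Gamma>. h x \<gamma> \<noteq> h y \<gamma>" if xy: "x \<in> topspace X" "y \<in> topspace X" "x \<noteq> y" for x y
    proof (rule ccontr)
      assume "\<not> (\<exists>\<gamma>\<in>\<Gamma>. h x \<gamma> \<noteq> h y \<gamma>)"
      then have "h x = h y" using PiE_ext[OF h_cube[OF xy(1)] h_cube[OF xy(2)]] by blast
      then show False using homeomorphic_imp_injective_map[OF h] xy by (meson inj_onD)
    qed
  qed
qed

end
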